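(* Let $M>0$, $T\ge 1/M$, $y_0\in C^4([0,1])$. For $\varepsilon\in(0,1)$ let $y^\varepsilon$ be the solution of $y^\varepsilon_t-\varepsilon y^\varepsilon_{xx}+My^\varepsilon_x=0$ in $(0,1)\times(0,T)$, $y^\varepsilon(0,t)=0$, $y^\varepsilon(1,t)=0$ for $t\in(0,T)$, $y^\varepsilon(x,0)=y_0(x)$ for $x\in(0,1)$. Then there exist constants $C>0$, $C'>0$ and $\varepsilon_0>0$, independent of $\varepsilon$, such that for all $0<\varepsilon<\varepsilon_0$, $$\Big\|y^\varepsilon\Big(\cdot,\frac1M\Big)\Big\|_{L^2(0,1)}\le C\big(|y_0(0)|\varepsilon^{1/4}+|y_0'(0)|\varepsilon^{3/4}+|y_0''(0)|\varepsilon^{5/4}\big)+C'\varepsilon^{3/2}.$$ *)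

theory Defs
  imports "HOL-Analysis.Analysis"
begin

definition C4_on_unit :: "(real \<Rightarrow> real) \<Rightarrow> (nat \<Rightarrow> real \<Rightarrow> real) \<Rightarrow> bool" where
  "C4_on_unit y0 D \<longleftrightarrow>
     (\<forall>x\<in>{0..1}. D 0 x = y0 x) \<and>
     (\<forall>k<4. \<forall>x\<in>{0..1}. (D k has_real_derivative D (Suc k) x) (at x within {0..1})) \<and>
     continuous_on {0..1} (D 4)"

text \<open>The solution is continuous on the closed rectangle except possibly at the two
  corners (0,0), (1,0) (no compatibility conditions are assumed on y0).\<close>
definition adv_diff_solution ::
  "real \<Rightarrow> real \<Rightarrow> real \<Rightarrow> (real \<Rightarrow> real) \<Rightarrow> (real \<Rightarrow> real \<Rightarrow> real) \<Rightarrow> bool" where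
  "adv_diff_solution M T eps y0 y \<longleftrightarrow>
     (\<exists>yt yx yxx :: real \<Rightarrow> real \<Rightarrow> real.
        (\<forall>x\<in>{0<..<1}. \<forall>t\<in>{0<..<T}.
           ((\<lambda>s. y x s) has_real_derivative yt x t) (at t) \<and>
           ((\<lambda>z. y z t) has_real_derivative yx x t) (at x) \<and>
           ((\<lambda>z. yx z t) has_real_derivative yxx x t) (at x) \<and>
           yt x t - eps * yxx x t + M * yx x t = 0) \<and>
        continuous_on ({0<..<1} \<times> {0<..<T}) (\<lambda>(x, t). yt x t) \<and>
        continuous_on ({0<..<1} \<times> {0<..<T}) (\<lambda>(x, t). yxx x t)) \<and>
     continuous_on ({0..1} \<times> {0..T} - {(0, 0), (1, 0)}) (\<lambda>(x, t). y x t) \<and>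
     bounded ((\<lambda>(x, t). y x t) ` ({0..1} \<times> {0..T})) \<and>
     (\<forall>t\<in>{0<..<T}. y 0 t = 0 \<and> y 1 t = 0) \<and>
     (\<forall>x\<in>{0<..<1}. y x 0 = y0 x)"

definition L2_norm_unit :: "(real \<Rightarrow> real) \<Rightarrow> real" where
  "L2_norm_unit f = sqrt (integral {0..1} (\<lambda>x. (f x)\<^sup>2))"

end

theory Submission
  imports Defs
begin

(* A barrier argument for the parabolic maximum principle. For lam = sqrt (M / eps) the travelling
   exponential exp (lam x - lam (M - eps lam) t) solves the equation, and at the transit time t = 1/M
   it equals e exp (lam (x - 1)), a boundary layer of width sqrt (eps / M) at the outflow end x = 1.
   A Taylor expansion of y0 at 0 gives |y0 x| <= W exp (lam x) with
   W = |y0 0| + |y0' 0| / lam + |y0'' 0| / lam^2 + O(lam^-3), so by comparison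
   |y (x, 1/M)| <= e W exp (lam (x - 1)), whose L2 norm is at most e W / sqrt (2 lam), which is of
   order eps^(1/4) W. Since y may be discontinuous at the corners (0,0) and (1,0), the comparison
   function is enlarged by heat kernels issued from the corners at time -rho^2; their contribution
   at a fixed positive time vanishes as rho tends to 0. *)

lemma power_le_fact_mult_exp:
  fixes v :: real
  assumes "0 \<le> v"
  shows "v ^ n \<le> fact n * exp v"
proof -
  have "(\<Sum>k\<in>{n}. v ^ k /\<^sub>R fact k) \<le> (\<Sum>k. v ^ k /\<^sub>R fact k)"
    using assms by (intro sum_le_suminf summable_exp_generic) auto
  then show ?thesis
    by (simp add: exp_def field_simps)
qed

lemma cubic_le_exp:
  fixes x \<rho> :: real
  assumes "0 < \<rho>" "0 \<le> x" "0 \<le> a0" "0 \<le> a1" "0 \<le> a2" "0 \<le> a3"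
  shows "a0 + a1 * x + a2 * x\<^sup>2 + a3 * x ^ 3 \<le> (a0 + a1 * \<rho> + 2 * a2 * \<rho>\<^sup>2 + 6 * a3 * \<rho> ^ 3) * exp (x / \<rho>)"
proof -
  have pow: "x ^ n \<le> fact n * \<rho> ^ n * exp (x / \<rho>)" for n
    using power_le_fact_mult_exp[of "x / \<rho>" n] assms(1,2) by (simp add: power_divide field_simps)
  have "a0 * x ^ 0 + a1 * x ^ 1 + a2 * x ^ 2 + a3 * x ^ 3 \<le>
      a0 * (fact 0 * \<rho> ^ 0 * exp (x / \<rho>)) + a1 * (fact 1 * \<rho> ^ 1 * exp (x / \<rho>))
      + a2 * (fact 2 * \<rho> ^ 2 * exp (x / \<rho>)) + a3 * (fact 3 * \<rho> ^ 3 * exp (x / \<rho>))"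
    using assms by (intro add_mono mult_left_mono pow) auto
  then show ?thesis
    by (simp add: fact_numeral algebra_simps)
qed

lemma C4_on_unit_taylor_remainder:
  assumes "C4_on_unit y0 D"
  obtains K where "0 \<le> K"
    "\<And>x. x \<in> {0..1} \<Longrightarrow> \<bar>y0 x - (y0 0 + D 1 0 * x + D 2 0 * x\<^sup>2 / 2)\<bar> \<le> K * x ^ 3"
proof -
  have D0: "\<And>x. x \<in> {0..1} \<Longrightarrow> D 0 x = y0 x"
    and D: "\<And>k x. k < 4 \<Longrightarrow> x \<in> {0..1} \<Longrightarrow> (D k has_real_derivative D (Suc k) x) (at x within {0..1})"
    using assms unfolding C4_on_unit_def by auto
  have "continuous_on {0..1} (D 3)"
    by (rule DERIV_continuous_on) (rule D, auto)
  then have "bounded (D 3 ` {0..1})"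
    by (intro compact_imp_bounded compact_continuous_image compact_Icc)
  then obtain K where K: "\<And>x. x \<in> {0..1} \<Longrightarrow> \<bar>D 3 x\<bar> \<le> K"
    unfolding bounded_iff by fastforce
  have K0: "0 \<le> K" using K[of 0] by auto
  show thesis
  proof (rule that[OF K0])
    fix x :: real assume x: "x \<in> {0..1}"
    let ?R = "\<lambda>t. ((x - t) ^ 2 / 2) * D 3 t"
    have "(D m has_real_derivative D (Suc m) t) (at t within {0..x})" if "m < 3" "t \<in> {0..x}" for m t
      using that x by (intro has_field_derivative_subset[OF D]) auto
    then have taylor: "(?R has_integral D 0 x - (\<Sum>i<3. (x - 0) ^ i / fact i * D i 0)) {0..x}"
      using Taylor_has_integral[of 3 D "D 0" 0 x] x
      by (simp add: has_real_derivative_iff_has_vector_derivative)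
    have R_bound: "\<bar>?R t\<bar> \<le> x\<^sup>2 / 2 * K" if "t \<in> {0..x}" for t
      using that x K[of t] by (auto simp: abs_mult intro!: mult_mono power_mono)
    have "\<bar>D 0 x - (\<Sum>i<3. (x - 0) ^ i / fact i * D i 0)\<bar> \<le> x\<^sup>2 / 2 * K * x"
      using has_integral_bound_real[OF _ finite.emptyI taylor, of "x\<^sup>2 / 2 * K"] R_bound x K0 by simp
    then show "\<bar>y0 x - (y0 0 + D 1 0 * x + D 2 0 * x\<^sup>2 / 2)\<bar> \<le> K * x ^ 3"
      using x D0[of x] D0[of 0] mult_nonneg_nonneg[OF K0, of "x ^ 3"]
      by (simp add: eval_nat_numeral algebra_simps)
  qed
qed

definition adv_diff_classical :: "real \<Rightarrow> real \<Rightarrow> real \<Rightarrow> (real \<Rightarrow> real \<Rightarrow> real) \<Rightarrow> bool" where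
  "adv_diff_classical M T eps u \<longleftrightarrow>
     (\<exists>ut ux uxx. \<forall>x\<in>{0<..<1}. \<forall>t\<in>{0<..<T}.
        ((\<lambda>s. u x s) has_real_derivative ut x t) (at t) \<and>
        ((\<lambda>z. u z t) has_real_derivative ux x t) (at x) \<and>
        ((\<lambda>z. ux z t) has_real_derivative uxx x t) (at x) \<and>
        ut x t - eps * uxx x t + M * ux x t = 0)"

lemma adv_diff_solution_classical:
  "adv_diff_solution M T eps y0 y \<Longrightarrow> adv_diff_classical M T eps y"
  unfolding adv_diff_solution_def adv_diff_classical_def by blast

lemma adv_diff_classical_lincomb:
  assumes "adv_diff_classical M T eps u" "adv_diff_classical M T eps v"
  shows "adv_diff_classical M T eps (\<lambda>x t. a * u x t + b * v x t)"
proof -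
  obtain ut ux uxx vt vx vxx where
    u: "\<forall>x\<in>{0<..<1}. \<forall>t\<in>{0<..<T}.
        ((\<lambda>s. u x s) has_real_derivative ut x t) (at t) \<and>
        ((\<lambda>z. u z t) has_real_derivative ux x t) (at x) \<and>
        ((\<lambda>z. ux z t) has_real_derivative uxx x t) (at x) \<and>
        ut x t - eps * uxx x t + M * ux x t = 0" and
    v: "\<forall>x\<in>{0<..<1}. \<forall>t\<in>{0<..<T}.
        ((\<lambda>s. v x s) has_real_derivative vt x t) (at t) \<and>
        ((\<lambda>z. v z t) has_real_derivative vx x t) (at x) \<and>
        ((\<lambda>z. vx z t) has_real_derivative vxx x t) (at x) \<and>
        vt x t - eps * vxx x t + M * vx x t = 0"
    using assms unfolding adv_diff_classical_def by blast
  show ?thesis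
    unfolding adv_diff_classical_def
  proof (intro exI ballI conjI)
    fix x t :: real assume "x \<in> {0<..<1}" "t \<in> {0<..<T}"
    note u = u[rule_format, OF this] and v = v[rule_format, OF this]
    show "((\<lambda>s. a * u x s + b * v x s) has_real_derivative a * ut x t + b * vt x t) (at t)"
      "((\<lambda>z. a * u z t + b * v z t) has_real_derivative a * ux x t + b * vx x t) (at x)"
      "((\<lambda>z. a * ux z t + b * vx z t) has_real_derivative a * uxx x t + b * vxx x t) (at x)"
      using u v by (auto intro!: derivative_eq_intros)
    have "a * (ut x t - eps * uxx x t + M * ux x t) + b * (vt x t - eps * vxx x t + M * vx x t) = 0"
      using u v by simp
    then show "a * ut x t + b * vt x t - eps * (a * uxx x t + b * vxx x t) + M * (a * ux x t + b * vx x t) = 0"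
      by (simp add: algebra_simps)
  qed
qed

lemma adv_diff_classical_exp_wave:
  "adv_diff_classical M T eps (\<lambda>x t. exp (lam * x - lam * (M - eps * lam) * t))"
  unfolding adv_diff_classical_def
proof (intro exI ballI conjI)
  fix x t :: real
  let ?E = "exp (lam * x - lam * (M - eps * lam) * t)"
  show "((\<lambda>s. exp (lam * x - lam * (M - eps * lam) * s)) has_real_derivative - lam * (M - eps * lam) * ?E) (at t)"
    "((\<lambda>z. exp (lam * z - lam * (M - eps * lam) * t)) has_real_derivative lam * ?E) (at x)"
    by (auto intro!: derivative_eq_intros)
  show "((\<lambda>z. lam * exp (lam * z - lam * (M - eps * lam) * t)) has_real_derivative lam * (lam * ?E)) (at x)"
    by (auto intro!: derivative_eq_intros)
  show "- lam * (M - eps * lam) * ?E - eps * (lam * (lam * ?E)) + M * (lam * ?E) = 0"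
    by (simp add: algebra_simps)
qed

lemma local_max_second_derivative_nonpos:
  fixes f f' :: "real \<Rightarrow> real"
  assumes "0 < d"
    and f': "\<And>z. \<bar>z - x\<bar> < d \<Longrightarrow> (f has_real_derivative f' z) (at z)"
    and f'': "(f' has_real_derivative f'') (at x)"
    and max: "\<And>z. \<bar>z - x\<bar> < d \<Longrightarrow> f z \<le> f x"
  shows "f' x = 0" "f'' \<le> 0"
proof -
  show f'0: "f' x = 0"
    by (rule DERIV_local_max[OF f'[of x] \<open>0 < d\<close>]) (use max \<open>0 < d\<close> in \<open>auto simp: abs_minus_commute\<close>)
  show "f'' \<le> 0"
  proof (rule ccontr)
    assume "\<not> f'' \<le> 0"
    then obtain e where "0 < e" and e: "\<And>h. 0 < h \<Longrightarrow> h < e \<Longrightarrow> f' x < f' (x + h)"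
      using DERIV_pos_inc_right[OF f''] by force
    define h where "h = min e d / 2"
    have h: "0 < h" "h < e" "h < d" using \<open>0 < e\<close> \<open>0 < d\<close> by (auto simp: h_def)
    have "\<exists>l z. x < z \<and> z < x + h \<and> DERIV f z :> l \<and> f (x + h) - f x = (x + h - x) * l"
    proof (rule MVT)
      show "continuous_on {x..x + h} f"
        by (rule continuous_at_imp_continuous_on) (use h in \<open>auto intro!: DERIV_isCont f'\<close>)
      show "f differentiable (at z)" if "x < z" "z < x + h" for z
        using f'[of z] that h real_differentiable_def by auto
    qed (use h in simp)
    then obtain l z where z: "x < z" "z < x + h" "DERIV f z :> l" "f (x + h) - f x = h * l"
      by auto
    then have "l = f' z" using DERIV_unique f'[of z] h by auto
    moreover have "0 < f' z" using e[of "z - x"] z h f'0 by auto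
    ultimately have "0 < h * l" using h by simp
    then have "f x < f (x + h)" using z by simp
    with max[of "x + h"] h show False by auto
  qed
qed

lemma left_local_max_derivative_nonneg:
  fixes g :: "real \<Rightarrow> real"
  assumes "0 < d" and g': "(g has_real_derivative g') (at t)"
    and max: "\<And>s. t - d < s \<Longrightarrow> s \<le> t \<Longrightarrow> g s \<le> g t"
  shows "0 \<le> g'"
proof (rule ccontr)
  assume "\<not> 0 \<le> g'"
  then obtain e where "0 < e" and e: "\<And>h. 0 < h \<Longrightarrow> h < e \<Longrightarrow> g t < g (t - h)"
    using DERIV_neg_dec_left[OF g'] by force
  define h where "h = min e d / 2"
  have "0 < h" "h < e" "h < d" using \<open>0 < e\<close> \<open>0 < d\<close> by (auto simp: h_def)
  then show False using e[of h] max[of "t - h"] by auto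
qed

lemma adv_diff_operator_nonneg_at_local_max:
  fixes w :: "real \<Rightarrow> real \<Rightarrow> real"
  assumes "0 < dx" "0 < dt" "0 < eps"
    and w_x: "\<And>z. \<bar>z - x\<bar> < dx \<Longrightarrow> ((\<lambda>z. w z t) has_real_derivative wx z) (at z)"
    and w_xx: "(wx has_real_derivative wxx) (at x)"
    and w_t: "((\<lambda>s. w x s) has_real_derivative wt) (at t)"
    and max_x: "\<And>z. \<bar>z - x\<bar> < dx \<Longrightarrow> w z t \<le> w x t"
    and max_t: "\<And>s. t - dt < s \<Longrightarrow> s \<le> t \<Longrightarrow> w x s \<le> w x t"
  shows "0 \<le> wt - eps * wxx + M * wx x"
proof -
  have "wx x = 0" "wxx \<le> 0"
    using local_max_second_derivative_nonpos[OF \<open>0 < dx\<close> w_x w_xx max_x] by auto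
  moreover have "0 \<le> wt"
    using left_local_max_derivative_nonneg[OF \<open>0 < dt\<close> w_t max_t] .
  moreover have "eps * wxx \<le> 0"
    using \<open>wxx \<le> 0\<close> \<open>0 < eps\<close> by (simp add: mult_nonneg_nonpos)
  ultimately show ?thesis
    by simp
qed

lemma strict_subsolution_nonpos:
  fixes w wt wx wxx :: "real \<Rightarrow> real \<Rightarrow> real"
  assumes derivs: "\<And>x t. x \<in> {0<..<1} \<Longrightarrow> t \<in> {0<..<T} \<Longrightarrow>
        ((\<lambda>s. w x s) has_real_derivative wt x t) (at t) \<and>
        ((\<lambda>z. w z t) has_real_derivative wx x t) (at x) \<and>
        ((\<lambda>z. wx z t) has_real_derivative wxx x t) (at x) \<and>
        wt x t - eps * wxx x t + M * wx x t < 0"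
    and cont: "continuous_on ({0..1} \<times> {0..T} - {(0, 0), (1, 0)}) (\<lambda>(x, t). w x t)"
    and corner: "\<And>x t. x \<in> {0..1} \<Longrightarrow> t \<in> {0..T} \<Longrightarrow> t \<le> \<sigma> \<Longrightarrow> x \<le> \<rho> \<or> 1 - \<rho> \<le> x \<Longrightarrow>
        w x t \<le> 0"
    and sides: "\<And>t. t \<in> {0<..<T} \<Longrightarrow> w 0 t \<le> 0 \<and> w 1 t \<le> 0"
    and bottom: "\<And>x. x \<in> {0<..<1} \<Longrightarrow> w x 0 \<le> 0"
    and "0 < eps" "0 < \<rho>" "0 < \<sigma>" "x1 \<in> {0..1}" "0 < t1" "t1 < T"
  shows "w x1 t1 \<le> 0"
proof (rule ccontr)
  assume "\<not> w x1 t1 \<le> 0"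
  define in_corner where "in_corner x t \<longleftrightarrow> t \<le> \<sigma> \<and> (x \<le> \<rho> \<or> 1 - \<rho> \<le> x)" for x t
  \<comment> \<open>On S, the rectangle up to time t1 without the open corner boxes, w is continuous; a positive
    maximum of w over S avoids the closed corner boxes, the sides and the bottom.\<close>
  define S where "S = {0..1::real} \<times> {0..t1} - ({..<\<rho>} \<times> {..<\<sigma>} \<union> {1 - \<rho><..} \<times> {..<\<sigma>})"
  have "compact S"
    unfolding S_def by (intro compact_diff compact_Times compact_Icc open_Un open_Times open_lessThan open_greaterThan)
  moreover have "continuous_on S (\<lambda>(x, t). w x t)"
    by (rule continuous_on_subset[OF cont]) (use \<open>0 < \<rho>\<close> \<open>0 < \<sigma>\<close> \<open>t1 < T\<close> in \<open>auto simp: S_def\<close>)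
  moreover have "(x1, t1) \<in> S"
    using corner[of x1 t1] \<open>\<not> w x1 t1 \<le> 0\<close> assms(9-11) by (auto simp: S_def)
  ultimately obtain xm tm where m: "(xm, tm) \<in> S" and max: "\<And>x t. (x, t) \<in> S \<Longrightarrow> w x t \<le> w xm tm"
    using continuous_attains_sup[of S "\<lambda>(x, t). w x t"] by fastforce
  have "0 < w xm tm"
    using max[OF \<open>(x1, t1) \<in> S\<close>] \<open>\<not> w x1 t1 \<le> 0\<close> by simp
  have xm: "0 \<le> xm" "xm \<le> 1" and tm: "0 \<le> tm" "tm \<le> t1"
    using m by (auto simp: S_def)
  have "\<not> in_corner xm tm"
    using corner[of xm tm] xm tm \<open>t1 < T\<close> \<open>0 < w xm tm\<close> by (auto simp: in_corner_def)
  then have xm_int: "xm \<in> {0<..<1}" and tm_int: "tm \<in> {0<..<T}"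
    using sides[of tm] bottom[of xm] xm tm \<open>0 < w xm tm\<close> \<open>0 < \<rho>\<close> \<open>0 < \<sigma>\<close> \<open>t1 < T\<close>
    by (auto simp: in_corner_def le_less)
  define dx where "dx = (if \<sigma> \<le> tm then min xm (1 - xm) else min (xm - \<rho>) (1 - \<rho> - xm))"
  have "0 < dx"
    using xm_int \<open>\<not> in_corner xm tm\<close> by (auto simp: dx_def in_corner_def)
  have dx_S: "(z, tm) \<in> S \<and> z \<in> {0<..<1}" if "\<bar>z - xm\<bar> < dx" for z
    using that tm \<open>0 < \<rho>\<close> by (cases "\<sigma> \<le> tm") (auto simp: dx_def S_def abs_less_iff)
  define dt where "dt = (if \<rho> < xm \<and> xm < 1 - \<rho> then tm else tm - \<sigma>)"
  have "0 < dt"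
    using tm_int \<open>\<not> in_corner xm tm\<close> by (auto simp: dt_def in_corner_def)
  have dt_S: "(xm, s) \<in> S" if "tm - dt < s" "s \<le> tm" for s
    using that tm xm \<open>0 < \<rho>\<close> \<open>0 < \<sigma>\<close> by (cases "\<rho> < xm \<and> xm < 1 - \<rho>") (auto simp: dt_def S_def)
  have w_t: "((\<lambda>s. w xm s) has_real_derivative wt xm tm) (at tm)"
    and w_xx: "((\<lambda>z. wx z tm) has_real_derivative wxx xm tm) (at xm)"
    and "wt xm tm - eps * wxx xm tm + M * wx xm tm < 0"
    using derivs[OF xm_int tm_int] by auto
  moreover have w_x: "((\<lambda>z. w z tm) has_real_derivative wx z tm) (at z)" if "\<bar>z - xm\<bar> < dx" for z
    using derivs[of z tm] dx_S[OF that] tm_int by blast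
  moreover have "0 \<le> wt xm tm - eps * wxx xm tm + M * wx xm tm"
    by (rule adv_diff_operator_nonneg_at_local_max[OF \<open>0 < dx\<close> \<open>0 < dt\<close> \<open>0 < eps\<close> w_x w_xx w_t])
      (use dx_S dt_S max in auto)
  ultimately show False
    by simp
qed

lemma adv_diff_weak_max_principle:
  assumes "adv_diff_classical M T eps w"
    and cont: "continuous_on ({0..1} \<times> {0..T} - {(0, 0), (1, 0)}) (\<lambda>(x, t). w x t)"
    and corner: "\<And>x t. x \<in> {0..1} \<Longrightarrow> t \<in> {0..T} \<Longrightarrow> t \<le> \<sigma> \<Longrightarrow> x \<le> \<rho> \<or> 1 - \<rho> \<le> x \<Longrightarrow>
        w x t \<le> 0"
    and sides: "\<And>t. t \<in> {0<..<T} \<Longrightarrow> w 0 t \<le> 0 \<and> w 1 t \<le> 0"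
    and bottom: "\<And>x. x \<in> {0<..<1} \<Longrightarrow> w x 0 \<le> 0"
    and "0 < eps" "0 < \<rho>" "0 < \<sigma>" "x1 \<in> {0..1}" "0 < t1" "t1 < T"
  shows "w x1 t1 \<le> 0"
proof -
  obtain wt wx wxx where derivs: "\<forall>x\<in>{0<..<1}. \<forall>t\<in>{0<..<T}.
        ((\<lambda>s. w x s) has_real_derivative wt x t) (at t) \<and>
        ((\<lambda>z. w z t) has_real_derivative wx x t) (at x) \<and>
        ((\<lambda>z. wx z t) has_real_derivative wxx x t) (at x) \<and>
        wt x t - eps * wxx x t + M * wx x t = 0"
    using assms(1) unfolding adv_diff_classical_def by blast
  have slack: "w x1 t1 \<le> \<gamma> * t1" if "0 < \<gamma>" for \<gamma>
  proof -
    have \<gamma>_t: "0 \<le> \<gamma> * t" if "0 \<le> t" for t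
      using that \<open>0 < \<gamma>\<close> by simp
    have "w x1 t1 - \<gamma> * t1 \<le> 0"
    proof (rule strict_subsolution_nonpos[where w="\<lambda>x t. w x t - \<gamma> * t" and \<rho>=\<rho> and \<sigma>=\<sigma>])
      show "((\<lambda>s. w x s - \<gamma> * s) has_real_derivative wt x t - \<gamma>) (at t) \<and>
          ((\<lambda>z. w z t - \<gamma> * t) has_real_derivative wx x t) (at x) \<and>
          ((\<lambda>z. wx z t) has_real_derivative wxx x t) (at x) \<and>
          wt x t - \<gamma> - eps * wxx x t + M * wx x t < 0"
        if "x \<in> {0<..<1}" "t \<in> {0<..<T}" for x t
        using derivs[rule_format, OF that] \<open>0 < \<gamma>\<close> by (auto intro!: derivative_eq_intros)
      show "continuous_on ({0..1} \<times> {0..T} - {(0, 0), (1, 0)}) (\<lambda>(x, t). w x t - \<gamma> * t)"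
        using cont unfolding case_prod_beta by (intro continuous_intros)
    next
      fix x t assume "x \<in> {0..1}" "t \<in> {0..T}" "t \<le> \<sigma>" "x \<le> \<rho> \<or> 1 - \<rho> \<le> x"
      then show "w x t - \<gamma> * t \<le> 0"
        using corner[of x t] \<gamma>_t[of t] by simp
    next
      fix t assume "t \<in> {0<..<T}"
      then show "w 0 t - \<gamma> * t \<le> 0 \<and> w 1 t - \<gamma> * t \<le> 0"
        using sides[of t] \<gamma>_t[of t] by simp
    qed (use bottom assms(6-) in auto)
    then show ?thesis by simp
  qed
  show ?thesis
  proof (rule field_le_epsilon)
    fix e :: real assume "0 < e"
    then show "w x1 t1 \<le> 0 + e" using slack[of "e / t1"] \<open>0 < t1\<close> by simp
  qed
qed

(* The fundamental solution for a unit mass placed at c at time -s, up to the factor sqrt (4 pi eps). *)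
definition heat_kernel :: "real \<Rightarrow> real \<Rightarrow> real \<Rightarrow> real \<Rightarrow> real \<Rightarrow> real \<Rightarrow> real" where
  "heat_kernel eps M c s x t = exp (- (x - c - M * t)\<^sup>2 / (4 * eps * (t + s))) / sqrt (t + s)"

definition heat_kernel_x :: "real \<Rightarrow> real \<Rightarrow> real \<Rightarrow> real \<Rightarrow> real \<Rightarrow> real \<Rightarrow> real" where
  "heat_kernel_x eps M c s x t = - 1 / (2 * eps * (t + s)) * (x - c - M * t) * heat_kernel eps M c s x t"

definition heat_kernel_xx :: "real \<Rightarrow> real \<Rightarrow> real \<Rightarrow> real \<Rightarrow> real \<Rightarrow> real \<Rightarrow> real" where
  "heat_kernel_xx eps M c s x t =
     ((x - c - M * t)\<^sup>2 / (4 * eps\<^sup>2 * (t + s)\<^sup>2) - 1 / (2 * eps * (t + s))) * heat_kernel eps M c s x t"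

definition heat_kernel_t :: "real \<Rightarrow> real \<Rightarrow> real \<Rightarrow> real \<Rightarrow> real \<Rightarrow> real \<Rightarrow> real" where
  "heat_kernel_t eps M c s x t =
     (M * (x - c - M * t) / (2 * eps * (t + s)) + (x - c - M * t)\<^sup>2 / (4 * eps * (t + s)\<^sup>2)
      - 1 / (2 * (t + s))) * heat_kernel eps M c s x t"

lemma heat_kernel_has_derivative_x:
  assumes "0 < t + s" "0 < eps"
  shows "((\<lambda>z. heat_kernel eps M c s z t) has_real_derivative heat_kernel_x eps M c s x t) (at x)"
proof -
  \<comment> \<open>Substituting s = tau - t lets field_simps see that t + s is nonzero.\<close>
  obtain \<tau> where s: "s = \<tau> - t" and "0 < \<tau>" using assms by (intro that[of "t + s"]) auto
  have "((\<lambda>z. - (z - c - M * t)\<^sup>2 / (4 * eps * (t + s))) has_real_derivative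
      - 1 / (2 * eps * (t + s)) * (x - c - M * t)) (at x)"
    unfolding s using \<open>0 < \<tau>\<close> assms by (auto intro!: derivative_eq_intros simp: field_simps)
  from DERIV_cdivide[OF DERIV_fun_exp[OF this], of "sqrt (t + s)"] show ?thesis
    unfolding heat_kernel_def heat_kernel_x_def by (rule DERIV_cong) (simp add: divide_inverse mult_ac)
qed

lemma heat_kernel_x_has_derivative_x:
  assumes "0 < t + s" "0 < eps"
  shows "((\<lambda>z. heat_kernel_x eps M c s z t) has_real_derivative heat_kernel_xx eps M c s x t) (at x)"
proof -
  obtain \<tau> where s: "s = \<tau> - t" and "0 < \<tau>" using assms by (intro that[of "t + s"]) auto
  define a where "a = - 1 / (2 * eps * (t + s))"
  have "((\<lambda>z. a * (z - c - M * t)) has_real_derivative a) (at x)"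
    by (auto intro!: derivative_eq_intros)
  from DERIV_mult[OF this heat_kernel_has_derivative_x[OF assms, where M=M and c=c]]
  have "((\<lambda>z. heat_kernel_x eps M c s z t) has_real_derivative
      a * heat_kernel eps M c s x t + a * (x - c - M * t) * heat_kernel_x eps M c s x t) (at x)"
    unfolding heat_kernel_x_def[abs_def] a_def by (rule DERIV_cong) (simp add: mult_ac)
  moreover have "a * heat_kernel eps M c s x t + a * (x - c - M * t) * heat_kernel_x eps M c s x t
      = heat_kernel_xx eps M c s x t"
    unfolding heat_kernel_xx_def heat_kernel_x_def a_def s using \<open>0 < \<tau>\<close> assms
    by (simp add: field_simps power2_eq_square)
  ultimately show ?thesis by simp
qed

lemma heat_kernel_has_derivative_t:
  assumes "0 < t + s" "0 < eps"
  shows "((\<lambda>r. heat_kernel eps M c s x r) has_real_derivative heat_kernel_t eps M c s x t) (at t)"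
proof -
  obtain \<tau> where s: "s = \<tau> - t" and "0 < \<tau>" using assms by (intro that[of "t + s"]) auto
  define E where "E = exp (- (x - c - M * t)\<^sup>2 / (4 * eps * (t + s)))"
  define V where "V = E * (M * (x - c - M * t) / (2 * eps * (t + s)) + (x - c - M * t)\<^sup>2 / (4 * eps * (t + s)\<^sup>2))
      * (1 / sqrt (t + s)) + - 1 / (2 * (t + s) * sqrt (t + s)) * E"
  have "((\<lambda>r. - (x - c - M * r)\<^sup>2 / (4 * eps * (r + s))) has_real_derivative
      M * (x - c - M * t) / (2 * eps * (t + s)) + (x - c - M * t)\<^sup>2 / (4 * eps * (t + s)\<^sup>2)) (at t)"
    unfolding s using \<open>0 < \<tau>\<close> assms
    by (auto intro!: derivative_eq_intros simp: field_simps power2_eq_square)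
  moreover have "((\<lambda>r. 1 / sqrt (r + s)) has_real_derivative - 1 / (2 * (t + s) * sqrt (t + s))) (at t)"
    unfolding s using \<open>0 < \<tau>\<close> by (auto intro!: derivative_eq_intros simp: field_simps)
  ultimately have "((\<lambda>r. exp (- (x - c - M * r)\<^sup>2 / (4 * eps * (r + s))) * (1 / sqrt (r + s)))
      has_real_derivative V) (at t)"
    unfolding E_def V_def by (intro DERIV_mult DERIV_fun_exp)
  moreover have "V = heat_kernel_t eps M c s x t"
  proof -
    define q where "q = sqrt \<tau>"
    have q: "0 < q" "\<tau> = q\<^sup>2" and sqrt_q: "sqrt (t + s) = q"
      unfolding q_def s using \<open>0 < \<tau>\<close> by auto
    show ?thesis
      unfolding V_def heat_kernel_t_def heat_kernel_def E_def[symmetric] sqrt_q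
      unfolding s q(2) using q(1) by (simp add: field_simps)
  qed
  ultimately show ?thesis
    unfolding heat_kernel_def by simp
qed

lemma heat_kernel_solves:
  assumes "0 < t + s" "0 < eps"
  shows "heat_kernel_t eps M c s x t - eps * heat_kernel_xx eps M c s x t + M * heat_kernel_x eps M c s x t = 0"
proof -
  obtain \<tau> where s: "s = \<tau> - t" and "0 < \<tau>" using assms by (intro that[of "t + s"]) auto
  then show ?thesis
    unfolding heat_kernel_t_def heat_kernel_xx_def heat_kernel_x_def s using assms
    by (simp add: field_simps power2_eq_square)
qed

lemma adv_diff_classical_heat_kernel:
  assumes "0 \<le> s" "0 < eps"
  shows "adv_diff_classical M T eps (heat_kernel eps M c s)"
  unfolding adv_diff_classical_def
proof (intro exI ballI conjI)
  fix x t :: real assume "x \<in> {0<..<1}" "t \<in> {0<..<T}"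
  then have "0 < t + s" using assms by auto
  then show "((\<lambda>r. heat_kernel eps M c s x r) has_real_derivative heat_kernel_t eps M c s x t) (at t)"
    "((\<lambda>z. heat_kernel eps M c s z t) has_real_derivative heat_kernel_x eps M c s x t) (at x)"
    "((\<lambda>z. heat_kernel_x eps M c s z t) has_real_derivative heat_kernel_xx eps M c s x t) (at x)"
    "heat_kernel_t eps M c s x t - eps * heat_kernel_xx eps M c s x t + M * heat_kernel_x eps M c s x t = 0"
    using assms by (auto intro: heat_kernel_has_derivative_t heat_kernel_has_derivative_x
        heat_kernel_x_has_derivative_x heat_kernel_solves)
qed

lemma heat_kernel_pos: "0 < t + s \<Longrightarrow> 0 < heat_kernel eps M c s x t"
  unfolding heat_kernel_def by simp

lemma heat_kernel_le:
  assumes "0 < t" "0 \<le> s" "0 < eps"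
  shows "heat_kernel eps M c s x t \<le> 1 / sqrt t"
proof -
  have "exp (- (x - c - M * t)\<^sup>2 / (4 * eps * (t + s))) \<le> 1"
    using assms by (simp add: divide_nonpos_pos)
  then show ?thesis
    unfolding heat_kernel_def using assms by (intro frac_le) auto
qed

lemma heat_kernel_ge:
  assumes "0 < eps" "0 < \<rho>" "\<bar>x - c - M * t\<bar> \<le> 2 * \<rho>" "\<rho>\<^sup>2 \<le> t + s" "t + s \<le> 2 * \<rho>\<^sup>2"
  shows "exp (- 1 / eps) / (2 * \<rho>) \<le> heat_kernel eps M c s x t"
proof -
  have "0 < t + s"
    using assms(2,4) by (meson order.strict_trans2 zero_less_power)
  have "(x - c - M * t)\<^sup>2 \<le> (2 * \<rho>)\<^sup>2"
    using assms(2,3) abs_le_square_iff[of "x - c - M * t" "2 * \<rho>"] by simp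
  then have "(x - c - M * t)\<^sup>2 / (4 * eps * (t + s)) \<le> (2 * \<rho>)\<^sup>2 / (4 * eps * \<rho>\<^sup>2)"
    using assms \<open>0 < t + s\<close> by (intro frac_le) auto
  also have "\<dots> = 1 / eps"
    using assms by (simp add: power_mult_distrib)
  finally have "exp (- 1 / eps) \<le> exp (- (x - c - M * t)\<^sup>2 / (4 * eps * (t + s)))"
    by simp
  moreover have "sqrt (t + s) \<le> 2 * \<rho>"
    using assms by (intro real_le_lsqrt) (auto simp: power_mult_distrib)
  ultimately show ?thesis
    unfolding heat_kernel_def using \<open>0 < t + s\<close> by (intro frac_le) auto
qed

lemma continuous_on_heat_kernel:
  assumes "0 < s" "0 < eps"
  shows "continuous_on ({0..1} \<times> {0..T}) (\<lambda>(x, t). heat_kernel eps M c s x t)"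
proof -
  have "0 < snd p + s" if "p \<in> {0..1::real} \<times> {0..T}" for p
    using that assms by (cases p) auto
  then show ?thesis
    unfolding heat_kernel_def case_prod_beta using assms
    by (auto intro!: continuous_intros)
qed

(* Heat kernels issued at time -rho^2 from the corners (0,0) and (1,0), where the solution may be
   discontinuous. *)
definition corner_barrier :: "real \<Rightarrow> real \<Rightarrow> real \<Rightarrow> real \<Rightarrow> real \<Rightarrow> real" where
  "corner_barrier eps M \<rho> x t = heat_kernel eps M 0 (\<rho>\<^sup>2) x t + heat_kernel eps M 1 (\<rho>\<^sup>2) x t"

lemma corner_barrier_nonneg:
  assumes "0 \<le> t" "0 < \<rho>"
  shows "0 \<le> corner_barrier eps M \<rho> x t"
proof -
  have "0 < t + \<rho>\<^sup>2"
    using assms by (simp add: add_nonneg_pos)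
  then show ?thesis
    unfolding corner_barrier_def
    using heat_kernel_pos[of t "\<rho>\<^sup>2" eps M 0 x] heat_kernel_pos[of t "\<rho>\<^sup>2" eps M 1 x] by simp
qed

lemma corner_barrier_le: "0 < t \<Longrightarrow> 0 < eps \<Longrightarrow> corner_barrier eps M \<rho> x t \<le> 2 / sqrt t"
  unfolding corner_barrier_def
  using heat_kernel_le[of t "\<rho>\<^sup>2" eps M 0 x] heat_kernel_le[of t "\<rho>\<^sup>2" eps M 1 x] by simp

lemma corner_barrier_ge:
  assumes "0 < eps" "0 < \<rho>" "0 \<le> M" "M * \<rho> \<le> 1"
    and "x \<in> {0..1}" "t \<in> {0..\<rho>\<^sup>2}" "x \<le> \<rho> \<or> 1 - \<rho> \<le> x"
  shows "exp (- 1 / eps) / (2 * \<rho>) \<le> corner_barrier eps M \<rho> x t"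
proof -
  have "M * t \<le> (M * \<rho>) * \<rho>"
    using assms(3,6) by (simp add: mult_left_mono power2_eq_square mult.assoc)
  also have "\<dots> \<le> \<rho>"
    using assms(2,4) by (simp add: mult_left_le_one_le)
  finally have "M * t \<le> \<rho>" .
  moreover have "0 \<le> M * t" "\<rho>\<^sup>2 \<le> t + \<rho>\<^sup>2" "t + \<rho>\<^sup>2 \<le> 2 * \<rho>\<^sup>2"
    using assms(3,6) by auto
  moreover have "0 < heat_kernel eps M c (\<rho>\<^sup>2) x t" for c
    using assms(2,6) by (intro heat_kernel_pos) (simp add: add_nonneg_pos)
  ultimately show ?thesis
    using assms(5,7) heat_kernel_ge[OF assms(1,2), of x _ M t "\<rho>\<^sup>2"]
    unfolding corner_barrier_def by (smt (verit, best) atLeastAtMost_iff)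
qed

lemma adv_diff_classical_corner_barrier:
  assumes "0 < eps"
  shows "adv_diff_classical M T eps (corner_barrier eps M \<rho>)"
proof -
  have "adv_diff_classical M T eps
      (\<lambda>x t. 1 * heat_kernel eps M 0 (\<rho>\<^sup>2) x t + 1 * heat_kernel eps M 1 (\<rho>\<^sup>2) x t)"
    using assms by (intro adv_diff_classical_lincomb adv_diff_classical_heat_kernel) auto
  then show ?thesis
    unfolding corner_barrier_def[abs_def] by simp
qed

lemma continuous_on_corner_barrier:
  assumes "0 < \<rho>" "0 < eps"
  shows "continuous_on ({0..1} \<times> {0..T}) (\<lambda>(x, t). corner_barrier eps M \<rho> x t)"
  unfolding corner_barrier_def case_prod_beta using assms
  by (intro continuous_on_add continuous_on_heat_kernel[unfolded case_prod_beta]) auto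

lemma corner_barrier_dominates:
  assumes "0 < eps" "0 < M" "0 \<le> B" "0 < t1" "0 < \<delta>"
  obtains \<rho> A where "0 < \<rho>" "0 \<le> A"
    "\<And>x t. x \<in> {0..1} \<Longrightarrow> t \<in> {0..\<rho>\<^sup>2} \<Longrightarrow> x \<le> \<rho> \<or> 1 - \<rho> \<le> x \<Longrightarrow> B \<le> A * corner_barrier eps M \<rho> x t"
    "\<And>x. A * corner_barrier eps M \<rho> x t1 \<le> \<delta>"
proof -
  \<comment> \<open>The weight A makes A exp (-1/eps) / (2 rho) = B; it is O(rho), hence at most delta at time t1
    for small rho.\<close>
  define K where "K = 4 * B * exp (1 / eps) + 1"
  define \<rho> where "\<rho> = min (1 / (M + 1)) (\<delta> * sqrt t1 / K)"
  define A where "A = 2 * \<rho> * B * exp (1 / eps)"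
  have "0 < K" using assms(3) by (simp add: K_def add_nonneg_pos)
  then have "0 < \<rho>" using assms by (simp add: \<rho>_def)
  then have "0 \<le> A" using assms(3) by (simp add: A_def)
  have "M * \<rho> \<le> M * (1 / (M + 1))"
    using assms(2) by (intro mult_left_mono) (auto simp: \<rho>_def)
  also have "\<dots> \<le> 1"
    using assms(2) by (simp add: divide_le_eq)
  finally have "M * \<rho> \<le> 1" .
  show thesis
  proof (rule that[OF \<open>0 < \<rho>\<close> \<open>0 \<le> A\<close>])
    fix x t assume "x \<in> {0..1}" "t \<in> {0..\<rho>\<^sup>2}" "x \<le> \<rho> \<or> 1 - \<rho> \<le> x"
    then have "A * (exp (- 1 / eps) / (2 * \<rho>)) \<le> A * corner_barrier eps M \<rho> x t"
      using corner_barrier_ge[OF assms(1) \<open>0 < \<rho>\<close> _ \<open>M * \<rho> \<le> 1\<close>] assms(2) \<open>0 \<le> A\<close>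
      by (intro mult_left_mono) auto
    moreover have "A * (exp (- 1 / eps) / (2 * \<rho>)) = B"
      using \<open>0 < \<rho>\<close> by (simp add: A_def exp_minus field_simps)
    ultimately show "B \<le> A * corner_barrier eps M \<rho> x t" by simp
  next
    fix x
    have "A * corner_barrier eps M \<rho> x t1 \<le> A * (2 / sqrt t1)"
      using corner_barrier_le[OF assms(4,1)] \<open>0 \<le> A\<close> by (rule mult_left_mono)
    also have "\<dots> = 4 * \<rho> * B * exp (1 / eps) / sqrt t1"
      by (simp add: A_def)
    also have "\<dots> \<le> (K * \<rho>) / sqrt t1"
      using \<open>0 < \<rho>\<close> assms(4) by (intro divide_right_mono) (auto simp: K_def algebra_simps)
    also have "\<dots> \<le> \<delta>"
    proof -
      have "\<rho> \<le> \<delta> * sqrt t1 / K" by (simp add: \<rho>_def)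
      then have "K * \<rho> \<le> \<delta> * sqrt t1"
        using \<open>0 < K\<close> by (simp add: le_divide_eq mult.commute)
      then show ?thesis
        using assms(4) by (simp add: divide_le_eq)
    qed
    finally show "A * corner_barrier eps M \<rho> x t1 \<le> \<delta>" .
  qed
qed

lemma adv_diff_solution_bounded:
  assumes "adv_diff_solution M T eps y0 y"
  obtains B where "0 \<le> B" "\<And>x t. x \<in> {0..1} \<Longrightarrow> t \<in> {0..T} \<Longrightarrow> \<bar>y x t\<bar> \<le> B"
proof -
  obtain B where "\<And>x t. x \<in> {0..1} \<Longrightarrow> t \<in> {0..T} \<Longrightarrow> \<bar>y x t\<bar> \<le> B"
    using assms unfolding adv_diff_solution_def bounded_iff by fastforce
  then show thesis
    by (intro that[of "max B 0"]) (auto intro: le_max_iff_disj[THEN iffD2])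
qed

lemma adv_diff_solution_uminus:
  assumes "adv_diff_solution M T eps y0 y"
  shows "adv_diff_solution M T eps (\<lambda>x. - y0 x) (\<lambda>x t. - y x t)"
proof -
  obtain yt yx yxx where derivs: "\<forall>x\<in>{0<..<1}. \<forall>t\<in>{0<..<T}.
        ((\<lambda>s. y x s) has_real_derivative yt x t) (at t) \<and>
        ((\<lambda>z. y z t) has_real_derivative yx x t) (at x) \<and>
        ((\<lambda>z. yx z t) has_real_derivative yxx x t) (at x) \<and>
        yt x t - eps * yxx x t + M * yx x t = 0"
    and "continuous_on ({0<..<1} \<times> {0<..<T}) (\<lambda>(x, t). yt x t)"
    and "continuous_on ({0<..<1} \<times> {0<..<T}) (\<lambda>(x, t). yxx x t)"
    using assms unfolding adv_diff_solution_def by blast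
  then have "\<exists>yt yx yxx. (\<forall>x\<in>{0<..<1}. \<forall>t\<in>{0<..<T}.
        ((\<lambda>s. - y x s) has_real_derivative yt x t) (at t) \<and>
        ((\<lambda>z. - y z t) has_real_derivative yx x t) (at x) \<and>
        ((\<lambda>z. yx z t) has_real_derivative yxx x t) (at x) \<and>
        yt x t - eps * yxx x t + M * yx x t = 0) \<and>
      continuous_on ({0<..<1} \<times> {0<..<T}) (\<lambda>(x, t). yt x t) \<and>
      continuous_on ({0<..<1} \<times> {0<..<T}) (\<lambda>(x, t). yxx x t)"
    by (intro exI[of _ "\<lambda>x t. - yt x t"] exI[of _ "\<lambda>x t. - yx x t"] exI[of _ "\<lambda>x t. - yxx x t"])
      (auto intro!: derivative_eq_intros continuous_on_minus[unfolded case_prod_beta] simp: case_prod_beta algebra_simps)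
  moreover have "bounded ((\<lambda>(x, t). - y x t) ` ({0..1} \<times> {0..T}))"
    using assms unfolding adv_diff_solution_def bounded_iff by auto
  moreover have "continuous_on ({0..1} \<times> {0..T} - {(0, 0), (1, 0)}) (\<lambda>(x, t). - y x t)"
    using assms unfolding adv_diff_solution_def case_prod_beta by (auto intro: continuous_on_minus)
  ultimately show ?thesis
    using assms unfolding adv_diff_solution_def by auto
qed

lemma adv_diff_solution_le_supersolution:
  assumes sol: "adv_diff_solution M T eps y0 y" and "0 < eps"
    and P: "adv_diff_classical M T eps P" "continuous_on ({0..1} \<times> {0..T}) (\<lambda>(x, t). P x t)"
    and corner: "\<And>x t. x \<in> {0..1} \<Longrightarrow> t \<in> {0..T} \<Longrightarrow> t \<le> \<sigma> \<Longrightarrow> x \<le> \<rho> \<or> 1 - \<rho> \<le> x \<Longrightarrow>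
        y x t \<le> P x t"
    and sides: "\<And>t. t \<in> {0<..<T} \<Longrightarrow> 0 \<le> P 0 t \<and> 0 \<le> P 1 t"
    and bottom: "\<And>x. x \<in> {0<..<1} \<Longrightarrow> y0 x \<le> P x 0"
    and "0 < \<rho>" "0 < \<sigma>" "x1 \<in> {0..1}" "0 < t1" "t1 < T"
  shows "y x1 t1 \<le> P x1 t1"
proof -
  have y: "continuous_on ({0..1} \<times> {0..T} - {(0, 0), (1, 0)}) (\<lambda>(x, t). y x t)"
    "\<And>t. t \<in> {0<..<T} \<Longrightarrow> y 0 t = 0 \<and> y 1 t = 0" "\<And>x. x \<in> {0<..<1} \<Longrightarrow> y x 0 = y0 x"
    using sol unfolding adv_diff_solution_def by auto
  have "y x1 t1 - P x1 t1 \<le> 0"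
  proof (rule adv_diff_weak_max_principle[where w="\<lambda>x t. y x t - P x t" and \<rho>=\<rho> and \<sigma>=\<sigma>])
    show "adv_diff_classical M T eps (\<lambda>x t. y x t - P x t)"
      using adv_diff_classical_lincomb[OF adv_diff_solution_classical[OF sol] P(1), of 1 "- 1"] by simp
    show "continuous_on ({0..1} \<times> {0..T} - {(0, 0), (1, 0)}) (\<lambda>(x, t). y x t - P x t)"
      using continuous_on_diff[OF y(1) continuous_on_subset[OF P(2)]] unfolding case_prod_beta by blast
  qed (use corner sides bottom y assms(2,7-) in auto)
  then show ?thesis by simp
qed

lemma adv_diff_solution_le_exp_wave:
  assumes sol: "adv_diff_solution M T eps y0 y" and "0 < eps" "0 < M" "0 \<le> W"
    and init: "\<And>x. x \<in> {0<..<1} \<Longrightarrow> y0 x \<le> W * exp (lam * x)"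
    and "x1 \<in> {0..1}" "0 < t1" "t1 < T"
  shows "y x1 t1 \<le> W * exp (lam * x1 - lam * (M - eps * lam) * t1)"
proof (rule field_le_epsilon)
  fix \<delta> :: real assume "0 < \<delta>"
  obtain B where "0 \<le> B" and B: "\<And>x t. x \<in> {0..1} \<Longrightarrow> t \<in> {0..T} \<Longrightarrow> \<bar>y x t\<bar> \<le> B"
    using adv_diff_solution_bounded[OF sol] by blast
  obtain \<rho> A where "0 < \<rho>" "0 \<le> A"
    and corner: "\<And>x t. x \<in> {0..1} \<Longrightarrow> t \<in> {0..\<rho>\<^sup>2} \<Longrightarrow> x \<le> \<rho> \<or> 1 - \<rho> \<le> x \<Longrightarrow>
        B \<le> A * corner_barrier eps M \<rho> x t"
    and small: "A * corner_barrier eps M \<rho> x1 t1 \<le> \<delta>"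
    using corner_barrier_dominates[OF \<open>0 < eps\<close> \<open>0 < M\<close> \<open>0 \<le> B\<close> \<open>0 < t1\<close> \<open>0 < \<delta>\<close>] by metis
  define P where "P x t = W * exp (lam * x - lam * (M - eps * lam) * t) + A * corner_barrier eps M \<rho> x t" for x t
  have P_ge: "A * corner_barrier eps M \<rho> x t \<le> P x t" "W * exp (lam * x - lam * (M - eps * lam) * t) \<le> P x t"
    "0 \<le> P x t" if "0 \<le> t" for x t
    using mult_nonneg_nonneg[OF \<open>0 \<le> A\<close> corner_barrier_nonneg[OF that \<open>0 < \<rho>\<close>]] \<open>0 \<le> W\<close>
    by (auto simp: P_def)
  have "y x1 t1 \<le> P x1 t1"
  proof (rule adv_diff_solution_le_supersolution[OF sol \<open>0 < eps\<close>, where \<rho>=\<rho> and \<sigma>="\<rho>\<^sup>2"])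
    show "adv_diff_classical M T eps P"
      unfolding P_def[abs_def]
      by (intro adv_diff_classical_lincomb adv_diff_classical_exp_wave adv_diff_classical_corner_barrier \<open>0 < eps\<close>)
    show "continuous_on ({0..1} \<times> {0..T}) (\<lambda>(x, t). P x t)"
      unfolding P_def case_prod_beta
      by (intro continuous_intros continuous_on_corner_barrier[unfolded case_prod_beta] \<open>0 < \<rho>\<close> \<open>0 < eps\<close>)
  next
    fix x t assume "x \<in> {0..1}" "t \<in> {0..T}" "t \<le> \<rho>\<^sup>2" "x \<le> \<rho> \<or> 1 - \<rho> \<le> x"
    then show "y x t \<le> P x t"
      using B[of x t] corner[of x t] P_ge(1)[of t x] by auto
  next
    fix x :: real assume "x \<in> {0<..<1}"
    then show "y0 x \<le> P x 0"
      using init[of x] P_ge(2)[of 0 x] by simp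
  qed (use P_ge(3) assms(6-) \<open>0 < \<rho>\<close> in auto)
  with small show "y x1 t1 \<le> W * exp (lam * x1 - lam * (M - eps * lam) * t1) + \<delta>"
    by (simp add: P_def)
qed

lemma adv_diff_solution_abs_le_exp_wave:
  assumes sol: "adv_diff_solution M T eps y0 y" and "0 < eps" "0 < M" "0 \<le> W"
    and init: "\<And>x. x \<in> {0<..<1} \<Longrightarrow> \<bar>y0 x\<bar> \<le> W * exp (lam * x)"
    and "x1 \<in> {0..1}" "0 < t1" "t1 \<le> T"
  shows "\<bar>y x1 t1\<bar> \<le> W * exp (lam * x1 - lam * (M - eps * lam) * t1)"
proof -
  define E where "E t = W * exp (lam * x1 - lam * (M - eps * lam) * t)" for t
  have interior: "\<bar>y x1 t\<bar> \<le> E t" if "0 < t" "t < T" for t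
    using adv_diff_solution_le_exp_wave[OF sol assms(2-4) _ assms(6) that]
      adv_diff_solution_le_exp_wave[OF adv_diff_solution_uminus[OF sol] assms(2-4) _ assms(6) that]
      init by (fastforce simp: E_def abs_le_iff)
  show ?thesis
  proof (cases "t1 < T")
    case True
    then show ?thesis using interior \<open>0 < t1\<close> by (simp add: E_def)
  next
    case False
    then have "t1 = T" using \<open>t1 \<le> T\<close> by simp
    have "continuous_on ({0..1} \<times> {0..T} - {(0, 0), (1, 0)}) (\<lambda>(x, t). y x t)"
      using sol unfolding adv_diff_solution_def by blast
    then have "continuous_on {T/2..T} (\<lambda>t. (\<lambda>(x, t). y x t) (x1, t))"
      by (rule continuous_on_compose2)
        (use \<open>x1 \<in> {0..1}\<close> \<open>0 < t1\<close> \<open>t1 = T\<close> in \<open>auto intro!: continuous_intros\<close>)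
    then have "((\<lambda>t. y x1 t) \<longlongrightarrow> y x1 T) (at T within {T/2..T})"
      using \<open>0 < t1\<close> \<open>t1 = T\<close> unfolding continuous_on_def by auto
    then have "((\<lambda>t. y x1 t) \<longlongrightarrow> y x1 T) (at_left T)"
      using \<open>0 < t1\<close> \<open>t1 = T\<close> at_within_Icc_at_left[of "T/2" T] by simp
    moreover have "(E \<longlongrightarrow> E T) (at_left T)"
      unfolding E_def by (intro tendsto_intros)
    moreover have "\<forall>\<^sub>F t in at_left T. \<bar>y x1 t\<bar> \<le> E t"
      using eventually_at_left_real[of 0 T] \<open>0 < t1\<close> \<open>t1 = T\<close>
      by (auto elim!: eventually_mono intro: interior)
    ultimately have "\<bar>y x1 T\<bar> \<le> E T"
      by (intro tendsto_le[OF _ _ tendsto_rabs]) auto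
    then show ?thesis
      using \<open>t1 = T\<close> by (simp add: E_def)
  qed
qed

lemma L2_norm_unit_le_exp:
  assumes "continuous_on {0..1} f" "0 < lam"
    and f: "\<And>x. x \<in> {0..1} \<Longrightarrow> \<bar>f x\<bar> \<le> A * exp (lam * (x - 1))"
  shows "L2_norm_unit f \<le> \<bar>A\<bar> / sqrt (2 * lam)"
proof -
  have FTC: "((\<lambda>x. A\<^sup>2 * exp (2 * lam * (x - 1))) has_integral
      A\<^sup>2 * (exp (2 * lam * (1 - 1)) / (2 * lam) - exp (2 * lam * (0 - 1)) / (2 * lam))) {0..1}"
    using \<open>0 < lam\<close>
    by (intro has_integral_mult_right fundamental_theorem_of_calculus)
      (auto intro!: derivative_eq_intros simp: has_real_derivative_iff_has_vector_derivative[symmetric])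
  have "integral {0..1} (\<lambda>x. (f x)\<^sup>2) \<le> integral {0..1} (\<lambda>x. A\<^sup>2 * exp (2 * lam * (x - 1)))"
  proof (rule integral_le)
    show "(\<lambda>x. (f x)\<^sup>2) integrable_on {0..1}"
      by (intro integrable_continuous_interval continuous_intros assms(1))
    show "(\<lambda>x. A\<^sup>2 * exp (2 * lam * (x - 1))) integrable_on {0..1}"
      using FTC by blast
    fix x :: real assume "x \<in> {0..1}"
    then have "\<bar>f x\<bar>\<^sup>2 \<le> (A * exp (lam * (x - 1)))\<^sup>2"
      using f by (intro power_mono) auto
    moreover have "(exp (lam * (x - 1)))\<^sup>2 = exp (2 * lam * (x - 1))"
      by (simp add: power2_eq_square mult_exp_exp)
    ultimately show "(f x)\<^sup>2 \<le> A\<^sup>2 * exp (2 * lam * (x - 1))"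
      by (simp add: power_mult_distrib)
  qed
  also have "\<dots> = A\<^sup>2 * (1 / (2 * lam) - exp (- 2 * lam) / (2 * lam))"
    using integral_unique[OF FTC] by simp
  also have "\<dots> \<le> A\<^sup>2 / (2 * lam)"
    using \<open>0 < lam\<close> by (simp add: field_simps)
  finally have "L2_norm_unit f \<le> sqrt (A\<^sup>2 / (2 * lam))"
    unfolding L2_norm_unit_def by simp
  also have "\<dots> = \<bar>A\<bar> / sqrt (2 * lam)"
    by (simp add: real_sqrt_divide)
  finally show ?thesis .
qed

lemma adv_diff_solution_L2_at_transit_time:
  assumes sol: "adv_diff_solution M T eps y0 y" and "0 < eps" "0 < M" "1 / M \<le> T"
    and "0 < lam" "eps * lam\<^sup>2 = M" "0 \<le> W"
    and init: "\<And>x. x \<in> {0<..<1} \<Longrightarrow> \<bar>y0 x\<bar> \<le> W * exp (lam * x)"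
  shows "L2_norm_unit (\<lambda>x. y x (1 / M)) \<le> exp 1 * W / sqrt (2 * lam)"
proof -
  have transit: "lam * x - lam * (M - eps * lam) * (1 / M) = 1 + lam * (x - 1)" for x
    using \<open>0 < M\<close> \<open>eps * lam\<^sup>2 = M\<close> by (auto simp: field_simps power2_eq_square)
  have "\<bar>y x (1 / M)\<bar> \<le> (exp 1 * W) * exp (lam * (x - 1))" if "x \<in> {0..1}" for x
  proof -
    have "\<bar>y x (1 / M)\<bar> \<le> W * exp (1 + lam * (x - 1))"
      using adv_diff_solution_abs_le_exp_wave[OF sol assms(2,3,7) init that _ assms(4)] \<open>0 < M\<close>
      unfolding transit by simp
    then show ?thesis by (simp add: exp_add mult_ac)
  qed
  moreover have "continuous_on ({0..1} \<times> {0..T} - {(0, 0), (1, 0)}) (\<lambda>(x, t). y x t)"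
    using sol unfolding adv_diff_solution_def by blast
  then have "continuous_on {0..1} (\<lambda>x. (\<lambda>(x, t). y x t) (x, 1 / M))"
    by (rule continuous_on_compose2) (use assms(3,4) in \<open>auto intro!: continuous_intros\<close>)
  ultimately show ?thesis
    using L2_norm_unit_le_exp[of "\<lambda>x. y x (1 / M)" lam "exp 1 * W"] \<open>0 < lam\<close> \<open>0 \<le> W\<close> by simp
qed

lemma scaled_cubic_le:
  fixes r q a0 a1 a2 a3 :: real
  assumes "0 < r" "r \<le> 1" "0 < q" "0 \<le> a0" "0 \<le> a1" "0 \<le> a2" "0 \<le> a3"
  shows "(a0 + a1 * (r / q)\<^sup>2 + a2 * (r / q) ^ 4 + a3 * (r / q) ^ 6) * (r / q)
    \<le> (1 / q + 1 / q ^ 3 + 1 / q ^ 5) * (a0 * r + a1 * r ^ 3 + a2 * r ^ 5) + (a3 / q ^ 7 + 1) * r ^ 6"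
proof -
  define c where "c = 1 / q + 1 / q ^ 3 + 1 / q ^ 5"
  have c: "1 / q \<le> c" "1 / q ^ 3 \<le> c" "1 / q ^ 5 \<le> c"
    using \<open>0 < q\<close> by (simp_all add: c_def)
  have "a0 * r * (1 / q) \<le> a0 * r * c"
    by (rule mult_left_mono) (use c assms in auto)
  moreover have "a1 * r ^ 3 * (1 / q ^ 3) \<le> a1 * r ^ 3 * c"
    by (rule mult_left_mono) (use c assms in auto)
  moreover have "a2 * r ^ 5 * (1 / q ^ 5) \<le> a2 * r ^ 5 * c"
    by (rule mult_left_mono) (use c assms in auto)
  moreover have "a3 * r ^ 7 / q ^ 7 \<le> (a3 / q ^ 7 + 1) * r ^ 6"
  proof -
    have "a3 / q ^ 7 * r ^ 7 \<le> a3 / q ^ 7 * r ^ 6"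
      using assms by (intro mult_left_mono power_decreasing) auto
    then show ?thesis
      using \<open>0 < r\<close> by (simp add: algebra_simps add_increasing)
  qed
  ultimately show ?thesis
    unfolding c_def[symmetric] using \<open>0 < q\<close>
    by (simp add: power_divide algebra_simps eval_nat_numeral)
qed

(* eps = r^4 and M = q^4, so that all powers of eps occurring in the estimate are integral powers of r. *)
lemma adv_diff_solution_L2_at_transit_time_taylor:
  fixes r q :: real
  assumes sol: "adv_diff_solution M T (r ^ 4) y0 y" and "0 < r" "r \<le> 1" "0 < q" "M = q ^ 4" "1 / M \<le> T"
    and "0 \<le> K" and taylor: "\<And>x. x \<in> {0..1} \<Longrightarrow> \<bar>y0 x - (c0 + c1 * x + c2 * x\<^sup>2 / 2)\<bar> \<le> K * x ^ 3"
  shows "L2_norm_unit (\<lambda>x. y x (1 / M))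
    \<le> exp 1 * ((1 / q + 1 / q ^ 3 + 1 / q ^ 5) * (\<bar>c0\<bar> * r + \<bar>c1\<bar> * r ^ 3 + \<bar>c2\<bar> * r ^ 5)
               + (6 * K / q ^ 7 + 1) * r ^ 6)"
proof -
  define \<rho> where "\<rho> = (r / q)\<^sup>2"
  define W where "W = \<bar>c0\<bar> + \<bar>c1\<bar> * \<rho> + \<bar>c2\<bar> * \<rho>\<^sup>2 + 6 * K * \<rho> ^ 3"
  have "0 < \<rho>" using assms(2,4) by (simp add: \<rho>_def)
  then have "0 \<le> W" using \<open>0 \<le> K\<close> by (simp add: W_def)
  have "\<bar>y0 x\<bar> \<le> W * exp (1 / \<rho> * x)" if "x \<in> {0<..<1}" for x
  proof -
    have "\<bar>c0 + c1 * x + c2 * x\<^sup>2 / 2\<bar> \<le> \<bar>c0\<bar> + \<bar>c1\<bar> * x + \<bar>c2\<bar> / 2 * x\<^sup>2"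
      using that by (auto simp: abs_mult intro!: abs_triangle_ineq[THEN order_trans] add_mono)
    then have "\<bar>y0 x\<bar> \<le> \<bar>c0\<bar> + \<bar>c1\<bar> * x + \<bar>c2\<bar> / 2 * x\<^sup>2 + K * x ^ 3"
      using taylor[of x] that by auto
    also have "\<dots> \<le> W * exp (x / \<rho>)"
      using cubic_le_exp[of \<rho> x "\<bar>c0\<bar>" "\<bar>c1\<bar>" "\<bar>c2\<bar> / 2" K] \<open>0 < \<rho>\<close> \<open>0 \<le> K\<close> that
      by (simp add: W_def mult.commute)
    finally show ?thesis by simp
  qed
  moreover have "r ^ 4 * (1 / \<rho>)\<^sup>2 = M"
    using assms(2,4,5) by (simp add: \<rho>_def power_divide field_simps)
  ultimately have "L2_norm_unit (\<lambda>x. y x (1 / M)) \<le> exp 1 * W / sqrt (2 * (1 / \<rho>))"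
    using \<open>0 < \<rho>\<close> \<open>0 \<le> W\<close> assms(2,4,5,6)
    by (intro adv_diff_solution_L2_at_transit_time[OF sol]) auto
  also have "\<dots> \<le> exp 1 * (W * (r / q))"
  proof -
    have "q / r = sqrt (1 / \<rho>)"
      using assms(2,4) by (simp add: \<rho>_def power_divide real_sqrt_divide)
    also have "\<dots> \<le> sqrt (2 * (1 / \<rho>))"
      using \<open>0 < \<rho>\<close> by (simp add: divide_simps)
    finally have "exp 1 * W / sqrt (2 * (1 / \<rho>)) \<le> exp 1 * W / (q / r)"
      using assms(2,4) \<open>0 \<le> W\<close> by (intro frac_le) auto
    then show ?thesis
      by simp
  qed
  also have "\<dots> \<le> exp 1 * ((1 / q + 1 / q ^ 3 + 1 / q ^ 5) * (\<bar>c0\<bar> * r + \<bar>c1\<bar> * r ^ 3 + \<bar>c2\<bar> * r ^ 5)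
               + (6 * K / q ^ 7 + 1) * r ^ 6)"
  proof (rule mult_left_mono)
    show "W * (r / q) \<le> (1 / q + 1 / q ^ 3 + 1 / q ^ 5) * (\<bar>c0\<bar> * r + \<bar>c1\<bar> * r ^ 3 + \<bar>c2\<bar> * r ^ 5)
               + (6 * K / q ^ 7 + 1) * r ^ 6"
      using scaled_cubic_le[of r q "\<bar>c0\<bar>" "\<bar>c1\<bar>" "\<bar>c2\<bar>" "6 * K"] assms(2-4) \<open>0 \<le> K\<close>
      by (simp add: W_def \<rho>_def power_mult_distrib[symmetric] power_mult[symmetric])
  qed simp
  finally show ?thesis .
qed

theorem proposition5p1:
  fixes M T :: real and y0 :: "real \<Rightarrow> real" and D :: "nat \<Rightarrow> real \<Rightarrow> real"
  assumes "M > 0" and "T \<ge> 1 / M" and "C4_on_unit y0 D"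
  shows "\<exists>C>0. \<exists>C'>0. \<exists>eps0>0. \<forall>eps y.
           0 < eps \<and> eps < eps0 \<and> eps < 1 \<and> adv_diff_solution M T eps y0 y \<longrightarrow>
           L2_norm_unit (\<lambda>x. y x (1 / M))
             \<le> C * (\<bar>y0 0\<bar> * eps powr (1/4) + \<bar>D 1 0\<bar> * eps powr (3/4)
                    + \<bar>D 2 0\<bar> * eps powr (5/4)) + C' * eps powr (3/2)"
proof -
  obtain K where "0 \<le> K"
    and taylor: "\<And>x. x \<in> {0..1} \<Longrightarrow> \<bar>y0 x - (y0 0 + D 1 0 * x + D 2 0 * x\<^sup>2 / 2)\<bar> \<le> K * x ^ 3"
    using C4_on_unit_taylor_remainder[OF assms(3)] by blast
  define q where "q = M powr (1/4)"
  define C where "C = exp 1 * (1 / q + 1 / q ^ 3 + 1 / q ^ 5)"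
  define C' where "C' = exp 1 * (6 * K / q ^ 7 + 1)"
  have "0 < q" "M = q ^ 4"
    using \<open>M > 0\<close> by (simp_all add: q_def powr_realpow[symmetric] powr_powr)
  have "L2_norm_unit (\<lambda>x. y x (1 / M))
      \<le> C * (\<bar>y0 0\<bar> * eps powr (1/4) + \<bar>D 1 0\<bar> * eps powr (3/4) + \<bar>D 2 0\<bar> * eps powr (5/4))
        + C' * eps powr (3/2)"
    if "0 < eps" "eps < 1" "adv_diff_solution M T eps y0 y" for eps y
  proof -
    define r where "r = eps powr (1/4)"
    have r_pow: "r ^ k = eps powr (real k / 4)" for k
      using \<open>0 < eps\<close> by (simp add: r_def powr_realpow[symmetric] powr_powr)
    have "0 < r" "r \<le> 1"
      using that powr_less_mono2[of "1/4" eps 1] by (auto simp: r_def)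
    moreover have "adv_diff_solution M T (r ^ 4) y0 y"
      using that r_pow[of 4] by simp
    ultimately have "L2_norm_unit (\<lambda>x. y x (1 / M))
        \<le> exp 1 * ((1 / q + 1 / q ^ 3 + 1 / q ^ 5) * (\<bar>y0 0\<bar> * r + \<bar>D 1 0\<bar> * r ^ 3 + \<bar>D 2 0\<bar> * r ^ 5)
                   + (6 * K / q ^ 7 + 1) * r ^ 6)"
      using adv_diff_solution_L2_at_transit_time_taylor \<open>0 < q\<close> \<open>M = q ^ 4\<close> assms(2) \<open>0 \<le> K\<close> taylor
      by blast
    then show ?thesis
      unfolding C_def C'_def r_pow[of 3] r_pow[of 5] r_pow[of 6] by (simp add: r_def algebra_simps)
  qed
  moreover have "0 < C" "0 < C'"
    using \<open>0 < q\<close> \<open>0 \<le> K\<close> by (simp_all add: C_def C'_def add_pos_pos add_nonneg_pos)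
  ultimately show ?thesis
    by (intro exI[of _ C] exI[of _ C'] exI[of _ 1] conjI allI impI) auto
qed

end
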